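(* For any irrational number $\alpha \in \mathbb{R}\setminus\mathbb{Q}$, there are infinitely many fractions $\frac{P}{4Q}$, with $P$ an odd integer and $Q$ a positive integer, $P$ and $Q$ relatively prime, such that $$\left| \alpha - \frac{P}{4Q} \right| < \frac{1}{4Q^2}.$$ *)

theory Defs
  imports Complex_Main
begin

end

theory Submission
  imports Defs "HOL-Analysis.Elementary_Metric_Spaces"
begin

text \<open>
  Apply Dirichlet's theorem in its continued-fraction form to \<open>4\<alpha>\<close>: every convergent
  \<open>p\<^sub>n/q\<^sub>n\<close> of an irrational number is in lowest terms and satisfies
  \<open>\<bar>4\<alpha> - p\<^sub>n/q\<^sub>n\<bar> < 1/q\<^sub>n\<^sup>2\<close>, i.e. \<open>\<bar>\<alpha> - p\<^sub>n/(4q\<^sub>n)\<bar> < 1/(4q\<^sub>n\<^sup>2)\<close>.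
  Since \<open>p\<^sub>n q\<^sub>n\<^sub>-\<^sub>1 - p\<^sub>n\<^sub>-\<^sub>1 q\<^sub>n = \<plusminus>1\<close>, two consecutive numerators are never both even,
  so infinitely many convergents have odd numerator; as \<open>q\<^sub>n \<rightarrow> \<infinity>\<close> they accumulate
  at the irrational \<open>\<alpha>\<close>, and a finite set of rationals cannot do that.
\<close>

fun cf_remainder :: "real \<Rightarrow> nat \<Rightarrow> real" where
  "cf_remainder x 0 = x"
| "cf_remainder x (Suc n) = 1 / frac (cf_remainder x n)"

declare cf_remainder.simps(2) [simp del]

definition cf_quotient :: "real \<Rightarrow> nat \<Rightarrow> int" where
  "cf_quotient x n = \<lfloor>cf_remainder x n\<rfloor>"

text \<open>Shifted by one: \<open>cf_num x (Suc n) / cf_denom x (Suc n)\<close> is the convergent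
  \<open>p\<^sub>n/q\<^sub>n\<close>, and index \<open>0\<close> holds \<open>p\<^sub>-\<^sub>1 = 1\<close>, \<open>q\<^sub>-\<^sub>1 = 0\<close>.\<close>

fun cf_num :: "real \<Rightarrow> nat \<Rightarrow> int" where
  "cf_num x 0 = 1"
| "cf_num x (Suc 0) = cf_quotient x 0"
| "cf_num x (Suc (Suc n)) = cf_quotient x (Suc n) * cf_num x (Suc n) + cf_num x n"

fun cf_denom :: "real \<Rightarrow> nat \<Rightarrow> int" where
  "cf_denom x 0 = 0"
| "cf_denom x (Suc 0) = 1"
| "cf_denom x (Suc (Suc n)) = cf_quotient x (Suc n) * cf_denom x (Suc n) + cf_denom x n"

lemma frac_pos_if_irrational:
  fixes x :: real
  assumes "x \<notin> \<rat>"
  shows "frac x > 0"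
  using assms Ints_subset_Rats by auto

lemma cf_remainder_irrational:
  assumes "x \<notin> \<rat>"
  shows "cf_remainder x n \<notin> \<rat>"
proof (induction n)
  case (Suc n)
  show ?case
  proof
    assume "cf_remainder x (Suc n) \<in> \<rat>"
    then have "1 / cf_remainder x (Suc n) \<in> \<rat>"
      by (simp add: Rats_divide)
    then have "frac (cf_remainder x n) \<in> \<rat>"
      by (simp add: cf_remainder.simps(2))
    then have "frac (cf_remainder x n) + of_int \<lfloor>cf_remainder x n\<rfloor> \<in> \<rat>"
      by (intro Rats_add) auto
    with Suc show False
      by (simp add: frac_def)
  qed
qed (use assms in simp)

lemma cf_remainder_Suc_gt_1:
  assumes "x \<notin> \<rat>"
  shows "cf_remainder x (Suc n) > 1"
  using frac_pos_if_irrational[OF cf_remainder_irrational[OF assms]] frac_lt_1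
  by (simp add: cf_remainder.simps(2) less_divide_eq)

lemma cf_quotient_Suc_ge_1:
  assumes "x \<notin> \<rat>"
  shows "cf_quotient x (Suc n) \<ge> 1"
  using cf_remainder_Suc_gt_1[OF assms, of n] by (simp add: cf_quotient_def le_floor_iff)

lemma cf_remainder_expand:
  assumes "x \<notin> \<rat>"
  shows "cf_remainder x n = of_int (cf_quotient x n) + 1 / cf_remainder x (Suc n)"
  using frac_pos_if_irrational[OF cf_remainder_irrational[OF assms, of n]]
  by (simp add: cf_remainder.simps(2) cf_quotient_def frac_def)

lemma cf_denom_nonneg_mono:
  assumes "x \<notin> \<rat>"
  shows "0 \<le> cf_denom x n \<and> cf_denom x n \<le> cf_denom x (Suc n)"
proof (induction n)
  case (Suc n)
  have "cf_denom x (Suc n) \<le> cf_quotient x (Suc n) * cf_denom x (Suc n)"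
    using Suc cf_quotient_Suc_ge_1[OF assms, of n] by (simp add: mult_le_cancel_right1)
  with Suc show ?case
    by simp
qed simp

lemma cf_denom_Suc_Suc_ge_add:
  assumes "x \<notin> \<rat>"
  shows "cf_denom x (Suc n) + cf_denom x n \<le> cf_denom x (Suc (Suc n))"
  using cf_denom_nonneg_mono[OF assms, of "Suc n"] cf_quotient_Suc_ge_1[OF assms, of n]
  by (simp add: mult_le_cancel_right1)

lemma cf_denom_Suc_ge_1:
  assumes "x \<notin> \<rat>"
  shows "1 \<le> cf_denom x (Suc n)"
proof (induction n)
  case (Suc n)
  then show ?case
    using cf_denom_Suc_Suc_ge_add[OF assms, of n] cf_denom_nonneg_mono[OF assms, of n] by linarith
qed simp

lemma cf_denom_Suc_ge:
  assumes "x \<notin> \<rat>"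
  shows "int n \<le> cf_denom x (Suc n)"
proof (induction n)
  case (Suc n)
  have "int n + 1 \<le> cf_denom x (Suc n) + cf_denom x n"
    using Suc.IH cf_denom_Suc_ge_1[OF assms, of "n - 1"] by (cases n) simp_all
  then show ?case
    using cf_denom_Suc_Suc_ge_add[OF assms, of n] by simp
qed simp

lemma cf_det:
  "cf_num x (Suc n) * cf_denom x n - cf_num x n * cf_denom x (Suc n) = (-1) ^ Suc n"
  by (induction n) (simp_all add: algebra_simps)

lemma coprime_cf_num_cf_denom: "coprime (cf_num x n) (cf_denom x n)"
proof (cases n)
  case (Suc m)
  show ?thesis
  proof (rule coprimeI)
    fix c
    assume "c dvd cf_num x n" "c dvd cf_denom x n"
    then have "c dvd cf_num x (Suc m) * cf_denom x m - cf_num x m * cf_denom x (Suc m)"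
      using Suc by simp
    then have "c dvd (-1) ^ Suc m"
      by (simp only: cf_det)
    then show "is_unit c"
      by (rule dvd_unit_imp_unit) simp
  qed
qed simp

lemma odd_cf_num_Suc_or_odd_cf_num: "odd (cf_num x (Suc n)) \<or> odd (cf_num x n)"
proof (rule ccontr)
  assume "\<not> ?thesis"
  then have "2 dvd cf_num x (Suc n) * cf_denom x n - cf_num x n * cf_denom x (Suc n)"
    by auto
  then show False
    by (simp only: cf_det) simp
qed

lemma cf_value:
  assumes "x \<notin> \<rat>"
  shows "x * (cf_denom x (Suc n) * cf_remainder x (Suc n) + cf_denom x n)
       = cf_num x (Suc n) * cf_remainder x (Suc n) + cf_num x n"
proof (induction n)
  case 0
  define y where "y = cf_remainder x (Suc 0)"
  define a where "a = real_of_int (cf_quotient x 0)"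
  have "y \<noteq> 0"
    unfolding y_def using cf_remainder_Suc_gt_1[OF assms, of 0] by linarith
  moreover have "x = a + 1 / y"
    using cf_remainder_expand[OF assms, of 0] unfolding a_def y_def cf_remainder.simps(1) .
  ultimately have "x * y = a * y + 1"
    by (simp add: algebra_simps)
  then show ?case
    by (simp add: a_def y_def)
next
  case (Suc n)
  define y where "y = cf_remainder x (Suc (Suc n))"
  define a where "a = real_of_int (cf_quotient x (Suc n))"
  have y: "y \<noteq> 0"
    unfolding y_def using cf_remainder_Suc_gt_1[OF assms, of "Suc n"] by linarith
  have "x * (cf_denom x (Suc (Suc n)) * y + cf_denom x (Suc n))
      = y * (x * (cf_denom x (Suc n) * (a + 1 / y) + cf_denom x n))"
    using y by (simp add: a_def algebra_simps)
  also have "\<dots> = y * (cf_num x (Suc n) * (a + 1 / y) + cf_num x n)"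
    using Suc cf_remainder_expand[OF assms, of "Suc n"] by (simp add: a_def y_def)
  also have "\<dots> = cf_num x (Suc (Suc n)) * y + cf_num x (Suc n)"
    using y by (simp add: a_def algebra_simps)
  finally show ?case
    unfolding y_def .
qed

lemma cf_approx:
  assumes "x \<notin> \<rat>"
  shows "\<bar>x - cf_num x (Suc n) / cf_denom x (Suc n)\<bar> < 1 / (cf_denom x (Suc n))\<^sup>2"
proof -
  define y where "y = cf_remainder x (Suc n)"
  define p' where "p' = real_of_int (cf_num x (Suc n))"
  define p where "p = real_of_int (cf_num x n)"
  define q' where "q' = real_of_int (cf_denom x (Suc n))"
  define q where "q = real_of_int (cf_denom x n)"
  have "y > 1"
    unfolding y_def using cf_remainder_Suc_gt_1[OF assms] .
  have "q \<ge> 0" "q' \<ge> 1"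
    unfolding q_def q'_def using cf_denom_nonneg_mono[OF assms] cf_denom_Suc_ge_1[OF assms] by auto
  have expansion: "x * (q' * y + q) = p' * y + p"
    unfolding y_def p'_def p_def q'_def q_def using cf_value[OF assms] .
  have det: "p' * q - p * q' = (-1) ^ Suc n"
    unfolding p'_def p_def q'_def q_def using arg_cong[OF cf_det, of real_of_int] by simp
  have "q' < q' * y + q"
    using \<open>y > 1\<close> \<open>q \<ge> 0\<close> \<open>q' \<ge> 1\<close> by (smt (verit) mult_less_cancel_left1)
  have "(x * q' - p') * (q' * y + q) = q' * (x * (q' * y + q)) - p' * (q' * y + q)"
    by (simp add: algebra_simps)
  also have "\<dots> = (-1) ^ n"
    using det unfolding expansion by (simp add: algebra_simps)
  finally have "\<bar>(x * q' - p') * (q' * y + q)\<bar> = 1"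
    by simp
  then have "\<bar>x * q' - p'\<bar> = 1 / (q' * y + q)"
    using \<open>q' < q' * y + q\<close> \<open>q' \<ge> 1\<close> by (simp add: abs_mult eq_divide_eq)
  also have "\<dots> < 1 / q'"
    using \<open>q' < q' * y + q\<close> \<open>q' \<ge> 1\<close> by (intro divide_strict_left_mono) auto
  finally have "\<bar>x * q' - p'\<bar> / q' < 1 / q' / q'"
    using \<open>q' \<ge> 1\<close> by (intro divide_strict_right_mono) auto
  moreover have "\<bar>x - p' / q'\<bar> = \<bar>x * q' - p'\<bar> / q'"
    using \<open>q' \<ge> 1\<close> by (simp add: field_simps)
  ultimately show ?thesis
    unfolding p'_def q'_def by (simp add: power2_eq_square)
qed

lemma exists_odd_coprime_approx:
  fixes x :: real
  assumes "x \<notin> \<rat>"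
  shows "\<exists>P Q. odd P \<and> 0 < Q \<and> coprime P Q \<and> int m \<le> Q \<and>
           \<bar>x - of_int P / of_int Q\<bar> < 1 / (of_int Q)\<^sup>2"
proof -
  have convergent: "odd (cf_num x (Suc k)) \<Longrightarrow> \<exists>P Q. odd P \<and> 0 < Q \<and> coprime P Q \<and>
      int m \<le> Q \<and> \<bar>x - of_int P / of_int Q\<bar> < 1 / (of_int Q)\<^sup>2" if "m \<le> k" for k
  proof -
    have "int m \<le> cf_denom x (Suc k)"
      using cf_denom_Suc_ge[OF assms, of k] that by linarith
    with cf_denom_Suc_ge_1[OF assms, of k] coprime_cf_num_cf_denom cf_approx[OF assms, of k]
    show "odd (cf_num x (Suc k)) \<Longrightarrow> ?thesis"
      by (intro exI[of _ "cf_num x (Suc k)"] exI[of _ "cf_denom x (Suc k)"]) auto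
  qed
  from odd_cf_num_Suc_or_odd_cf_num[of x "Suc m"] show ?thesis
    using convergent[of m] convergent[of "Suc m"] by auto
qed

lemma exists_odd_coprime_quarter_approx:
  fixes \<alpha> \<epsilon> :: real
  assumes "\<alpha> \<notin> \<rat>" and "\<epsilon> > 0"
  shows "\<exists>P Q. odd P \<and> 0 < Q \<and> coprime P Q \<and>
           \<bar>\<alpha> - of_int P / (4 * of_int Q)\<bar> < 1 / (4 * (of_int Q)\<^sup>2) \<and>
           1 / (4 * (of_int Q)\<^sup>2) < \<epsilon>"
proof -
  obtain m :: nat where "0 < m" "1 / real m < \<epsilon>"
    using \<open>\<epsilon> > 0\<close> by (metis ex_inverse_of_nat_less inverse_eq_divide)
  have "4 * \<alpha> \<notin> \<rat>"
    using assms by (simp add: Rats_mult_iff)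
  then obtain P Q where PQ: "odd P" "0 < Q" "coprime P Q" "int m \<le> Q"
    and approx: "\<bar>4 * \<alpha> - of_int P / of_int Q\<bar> < 1 / (of_int Q)\<^sup>2"
    using exists_odd_coprime_approx by blast
  have "4 * \<alpha> - of_int P / of_int Q = 4 * (\<alpha> - of_int P / (4 * of_int Q))"
    using \<open>0 < Q\<close> by (simp add: field_simps)
  then have "\<bar>\<alpha> - of_int P / (4 * of_int Q)\<bar> = \<bar>4 * \<alpha> - of_int P / of_int Q\<bar> / 4"
    by (simp only: abs_mult) simp
  also have "\<dots> < 1 / (4 * (of_int Q)\<^sup>2)"
    using approx by simp
  finally have close: "\<bar>\<alpha> - of_int P / (4 * of_int Q)\<bar> < 1 / (4 * (of_int Q)\<^sup>2)" .
  have "real m \<le> of_int Q"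
    using \<open>int m \<le> Q\<close> by linarith
  moreover have "of_int Q \<le> (real_of_int Q)\<^sup>2"
    using \<open>0 < Q\<close> power_increasing[of 1 2 "real_of_int Q"] by simp
  ultimately have "real m \<le> 4 * (real_of_int Q)\<^sup>2"
    using \<open>0 < m\<close> by linarith
  then have "1 / (4 * (real_of_int Q)\<^sup>2) \<le> 1 / real m"
    using \<open>0 < m\<close> by (intro frac_le) auto
  with PQ close \<open>1 / real m < \<epsilon>\<close> show ?thesis
    by (metis order.strict_trans1)
qed

theorem corollary1:
  fixes \<alpha> :: real
  assumes "\<alpha> \<notin> \<rat>"
  shows "infinite {real_of_int P / (4 * real_of_int Q) | P Q :: int.
            odd P \<and> Q > 0 \<and> coprime P Q \<and>
            \<bar>\<alpha> - real_of_int P / (4 * real_of_int Q)\<bar> < 1 / (4 * (real_of_int Q)\<^sup>2)}"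
    (is "infinite ?S")
proof -
  have "\<alpha> islimpt ?S"
    unfolding islimpt_approachable_real
  proof (intro allI impI)
    fix \<epsilon> :: real
    assume "\<epsilon> > 0"
    then obtain P Q where PQ: "odd P" "0 < Q" "coprime P Q"
      and close: "\<bar>\<alpha> - of_int P / (4 * of_int Q)\<bar> < 1 / (4 * (of_int Q)\<^sup>2)"
      and small: "1 / (4 * (of_int Q)\<^sup>2) < \<epsilon>"
      using exists_odd_coprime_quarter_approx[OF assms] by blast
    have "of_int P / (4 * of_int Q) \<in> ?S"
      using PQ close by blast
    moreover have "of_int P / (4 * of_int Q) \<noteq> \<alpha>"
      using assms Rats_divide[OF Rats_of_int Rats_mult[OF Rats_number_of Rats_of_int]] by metis
    moreover have "\<bar>of_int P / (4 * of_int Q) - \<alpha>\<bar> < \<epsilon>"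
      using close small by (simp only: abs_minus_commute)
    ultimately show "\<exists>v\<in>?S. v \<noteq> \<alpha> \<and> \<bar>v - \<alpha>\<bar> < \<epsilon>"
      by blast
  qed
  then show ?thesis
    using islimpt_finite by blast
qed

end
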